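(* Let $P, Q \subseteq \mathbb{R}^d$ be rational polytopes such that for every integer vector $w \in \mathbb{Z}^d$ and every real $s > 0$ we have $L_{P + w}(s) = L_{Q + w}(s)$. Then $P = Q$.
   Context: For a polytope $P \subseteq \mathbb{R}^d$ and real $s \ge 0$, the real Ehrhart function is $L_P(s) = \#(sP \cap \mathbb{Z}^d)$, where $sP = \{sx : x \in P\}$. A rational polytope is the convex hull of finitely many points of $\mathbb{Q}^d$. *)

theory Defs
  imports "HOL-Analysis.Analysis"
begin

definition int_point :: "real^'n \<Rightarrow> bool" where
  "int_point x \<longleftrightarrow> (\<forall>i. x $ i \<in> \<int>)"

definition rat_point :: "real^'n \<Rightarrow> bool" where
  "rat_point x \<longleftrightarrow> (\<forall>i. x $ i \<in> \<rat>)"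

definition rational_polytope :: "(real^'n) set \<Rightarrow> bool" where
  "rational_polytope P \<longleftrightarrow> (\<exists>S. finite S \<and> (\<forall>x\<in>S. rat_point x) \<and> P = convex hull S)"

definition ehrhart :: "(real^'n) set \<Rightarrow> real \<Rightarrow> nat" where
  "ehrhart P s = card {x \<in> (\<lambda>y. s *\<^sub>R y) ` P. int_point x}"

end

theory Submission
  imports Defs
begin

text \<open>Clear the denominators of a rational vertex \<open>x\<close> of \<open>P\<close>: \<open>N x\<close> is a lattice point for some
  \<open>N > 0\<close>. Translating by the lattice vector \<open>w = k N x\<close> and dilating by \<open>s = N / (k N + 1)\<close> sends
  \<open>x\<close> to \<open>N x\<close>, while it shrinks all distances by \<open>s < 1 / k\<close>; for \<open>k\<close> larger than the diameter
  of \<open>P \<union> Q\<close>, the lattice point \<open>N x\<close> is then the only one in \<open>s (P + w) \<union> s (Q + w)\<close>. Hence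
  \<open>L\<^sub>P\<^sub>+\<^sub>w(s) = 1\<close>, so \<open>L\<^sub>Q\<^sub>+\<^sub>w(s) = 1\<close> as well, and the lattice point it counts must be \<open>N x\<close>, i.e.
  \<open>x \<in> Q\<close>. By convexity \<open>P \<subseteq> Q\<close>, and by symmetry \<open>P = Q\<close>.\<close>

lemma Rats_common_denominator:
  fixes f :: "'a \<Rightarrow> real"
  assumes "finite I" and "\<forall>i\<in>I. f i \<in> \<rat>"
  shows "\<exists>N::nat. N > 0 \<and> (\<forall>i\<in>I. real N * f i \<in> \<int>)"
  using assms
proof (induction I rule: finite_induct)
  case empty
  show ?case by (intro exI[of _ 1]) simp
next
  case (insert a I)
  then obtain N :: nat where N: "N > 0" "\<forall>i\<in>I. real N * f i \<in> \<int>"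
    by auto
  from insert.prems obtain p q :: int where pq: "q > 0" "f a = of_int p / of_int q"
    by (auto elim: Rats_cases')
  have "real (N * nat q) * f i \<in> \<int>" if "i \<in> insert a I" for i
    using that
  proof
    assume "i = a"
    have "real (nat q) * f a = of_int p"
      using pq by simp
    then show ?thesis using \<open>i = a\<close> by (simp add: mult.assoc)
  next
    assume "i \<in> I"
    then have "real N * f i * of_int q \<in> \<int>"
      using N(2) \<open>i \<in> I\<close> by (metis Ints_mult Ints_of_int)
    then show ?thesis using pq(1) by (simp add: algebra_simps)
  qed
  then show ?case using N(1) pq(1) by (intro exI[of _ "N * nat q"]) simp
qed

lemma rat_point_imp_int_multiple:
  fixes x :: "real^'n"
  assumes "rat_point x"
  shows "\<exists>N::nat. N > 0 \<and> int_point (real N *\<^sub>R x)"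
  using Rats_common_denominator[of UNIV "\<lambda>i. x $ i"] assms
  by (simp add: rat_point_def int_point_def)

lemma int_point_eq_if_dist_less_1:
  fixes a b :: "real^'n"
  assumes "int_point a" and "int_point b" and "dist a b < 1"
  shows "a = b"
proof -
  have "a $ i = b $ i" for i
  proof -
    have "\<bar>a $ i - b $ i\<bar> < 1"
      using component_le_norm_cart[of "a - b" i] assms(3) by (simp add: dist_norm)
    then show ?thesis
      using assms(1,2) Ints_eq_abs_less1 unfolding int_point_def by blast
  qed
  then show ?thesis by (simp add: vec_eq_iff)
qed

lemma ehrhart_translate:
  fixes P :: "(real^'n) set"
  assumes "s \<noteq> 0"
  shows "ehrhart ((\<lambda>x. x + w) ` P) s = card {p \<in> P. int_point (s *\<^sub>R (p + w))}"
proof -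
  let ?f = "\<lambda>p. s *\<^sub>R (p + w)"
  have "{y \<in> (\<lambda>y. s *\<^sub>R y) ` (\<lambda>x. x + w) ` P. int_point y} = ?f ` {p \<in> P. int_point (?f p)}"
    by auto
  moreover have "inj ?f"
    using assms by (intro injI) simp
  ultimately show ?thesis
    unfolding ehrhart_def by (simp add: card_image inj_on_subset)
qed

lemma rat_point_isolating_dilation:
  fixes x :: "real^'n"
  assumes "bounded S" and "rat_point x"
  obtains w s where "int_point w" and "s > 0" and "int_point (s *\<^sub>R (x + w))"
    and "\<And>p. p \<in> S \<Longrightarrow> int_point (s *\<^sub>R (p + w)) \<Longrightarrow> p = x"
proof -
  obtain N :: nat where "N > 0" and N_x: "int_point (real N *\<^sub>R x)"
    using rat_point_imp_int_multiple[OF assms(2)] by blast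
  obtain D where D: "\<And>p. p \<in> S \<Longrightarrow> dist p x \<le> D"
    using assms(1) bounded_any_center[of S x] by (auto simp: dist_commute)
  obtain k :: nat where k: "D < real k"
    using reals_Archimedean2 by blast
  define s where "s = real N / (real k * real N + 1)"
  define w where "w = real k *\<^sub>R (real N *\<^sub>R x)"
  have denom: "real k * real N + 1 > 0"
    by (intro add_nonneg_pos) simp_all
  have "s > 0"
    using \<open>N > 0\<close> denom by (simp add: s_def)
  have "s * real k < 1"
    using denom by (simp add: s_def field_simps)
  have w: "int_point w"
    using N_x unfolding w_def int_point_def by (simp add: mult.assoc Ints_mult)
  have "x + w = (real k * real N + 1) *\<^sub>R x"
    by (simp add: w_def algebra_simps)
  then have x: "s *\<^sub>R (x + w) = real N *\<^sub>R x"
    using denom by (simp add: s_def)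
  show thesis
  proof (rule that[OF w \<open>s > 0\<close>])
    show "int_point (s *\<^sub>R (x + w))"
      using x N_x by simp
    fix p assume "p \<in> S" and p: "int_point (s *\<^sub>R (p + w))"
    have "dist (s *\<^sub>R (p + w)) (s *\<^sub>R (x + w)) = s * dist p x"
      using \<open>s > 0\<close> by (simp add: dist_norm algebra_simps flip: scaleR_diff_right)
    also have "\<dots> < s * real k"
      using D[OF \<open>p \<in> S\<close>] k \<open>s > 0\<close> by simp
    finally have "s *\<^sub>R (p + w) = s *\<^sub>R (x + w)"
      using \<open>s * real k < 1\<close> p x N_x by (intro int_point_eq_if_dist_less_1) auto
    then show "p = x"
      using \<open>s > 0\<close> by simp
  qed
qed

lemma rat_point_mem_if_ehrhart_eq:
  fixes P Q :: "(real^'n) set"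
  assumes "bounded P" and "bounded Q" and "x \<in> P" and "rat_point x"
    and L: "\<And>w s. int_point w \<Longrightarrow> s > 0 \<Longrightarrow>
           ehrhart ((\<lambda>x. x + w) ` P) s = ehrhart ((\<lambda>x. x + w) ` Q) s"
  shows "x \<in> Q"
proof -
  obtain w s where "int_point w" and "s > 0" and x: "int_point (s *\<^sub>R (x + w))"
    and isolated: "\<And>p. p \<in> P \<union> Q \<Longrightarrow> int_point (s *\<^sub>R (p + w)) \<Longrightarrow> p = x"
    using rat_point_isolating_dilation[of "P \<union> Q" x] assms(1,2,4) by auto
  have "{p \<in> P. int_point (s *\<^sub>R (p + w))} = {x}"
    using \<open>x \<in> P\<close> x isolated by blast
  then have "card {q \<in> Q. int_point (s *\<^sub>R (q + w))} = 1"
    using L[OF \<open>int_point w\<close> \<open>s > 0\<close>] \<open>s > 0\<close> by (simp add: ehrhart_translate)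
  then obtain q where "q \<in> Q" and "int_point (s *\<^sub>R (q + w))"
    by (metis (no_types, lifting) card.empty empty_Collect_eq zero_neq_one)
  then show ?thesis
    using isolated by blast
qed

lemma rational_polytope_subset_if_ehrhart_eq:
  fixes P Q :: "(real^'n) set"
  assumes "rational_polytope P" and "convex Q" and "bounded Q"
    and "\<And>w s. int_point w \<Longrightarrow> s > 0 \<Longrightarrow>
           ehrhart ((\<lambda>x. x + w) ` P) s = ehrhart ((\<lambda>x. x + w) ` Q) s"
  shows "P \<subseteq> Q"
proof -
  obtain S where "finite S" and rat: "\<forall>x\<in>S. rat_point x" and P: "P = convex hull S"
    using assms(1) unfolding rational_polytope_def by blast
  have "bounded P"
    using \<open>finite S\<close> P by (simp add: finite_imp_bounded_convex_hull)
  have "S \<subseteq> Q"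
    using rat_point_mem_if_ehrhart_eq[OF \<open>bounded P\<close> assms(3) _ _ assms(4)] rat P
    by (meson hull_inc subsetI)
  then show ?thesis
    using P assms(2) by (simp add: hull_minimal)
qed

lemma rational_polytope_convex_bounded:
  assumes "rational_polytope P"
  shows "convex P" and "bounded P"
  using assms unfolding rational_polytope_def
  by (auto simp: finite_imp_bounded_convex_hull)

theorem theorem2:
  fixes P Q :: "(real^'n) set"
  assumes "rational_polytope P" and "rational_polytope Q"
    and "\<And>w s. int_point w \<Longrightarrow> s > 0 \<Longrightarrow>
           ehrhart ((\<lambda>x. x + w) ` P) s = ehrhart ((\<lambda>x. x + w) ` Q) s"
  shows "P = Q"
proof
  show "P \<subseteq> Q"
    using rational_polytope_subset_if_ehrhart_eq[OF assms(1)]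
      rational_polytope_convex_bounded[OF assms(2)] assms(3) by blast
  show "Q \<subseteq> P"
    using rational_polytope_subset_if_ehrhart_eq[OF assms(2)]
      rational_polytope_convex_bounded[OF assms(1)] assms(3) by presburger
qed

end
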